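(* Let $K=3$ and let $l\ge m>0$ be integers. Then \[ h(l,\,m,\,0)\ \le\ h(l-1,\,m-1,\,0)+2. \]
   Context: For a vector $\vec n=(n_1,n_2,n_3)$ of nonnegative integers, the following random process is run: stocks start at $\vec n^{(0)}=\vec n$; at each step $t=1,2,\dots$, as long as at least two coordinates of $\vec n^{(t-1)}$ are nonzero, an index $i$ is chosen uniformly at random (independently of the past) among the indices with $n_i^{(t-1)}>0$, and $\vec n^{(t)}=\vec n^{(t-1)}-\vec e_i$ ($\vec e_i$ the $i$-th standard unit vector). The process stops at the first time $T$ at which at most one coordinate is nonzero, and $h(\vec n)=\mathbb{E}[T]$. Equivalently, with $\operatorname{support}(\vec n)=\{i:n_i\ne 0\}$: $h(\vec n)=0$ if $|\operatorname{support}(\vec n)|\le1$, and otherwise $h(\vec n)=1+\frac{1}{|\operatorname{support}(\vec n)|}\sum_{i\in\operatorname{support}(\vec n)}h(\vec n-\vec e_i)$. *)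

theory Defs
  imports Complex_Main
begin

text \<open>Expected stopping time h of the random depletion process for K = 3 stocks.
  A stock vector is a triple (n1, n2, n3) of naturals; the support is the set of
  indices i in {1,2,3} with n_i nonzero.\<close>

definition supp3 :: "nat \<times> nat \<times> nat \<Rightarrow> nat set" where
  "supp3 v = (case v of (a, b, c) \<Rightarrow>
      {i. (i = 1 \<and> a \<noteq> 0) \<or> (i = 2 \<and> b \<noteq> 0) \<or> (i = 3 \<and> c \<noteq> 0)})"

definition dec3 :: "nat \<times> nat \<times> nat \<Rightarrow> nat \<Rightarrow> nat \<times> nat \<times> nat" where
  "dec3 v i = (case v of (a, b, c) \<Rightarrow>
      (if i = 1 then (a - 1, b, c) else if i = 2 then (a, b - 1, c) else (a, b, c - 1)))"

function h :: "nat \<times> nat \<times> nat \<Rightarrow> real" where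
  "h v = (if card (supp3 v) \<le> 1 then 0
          else 1 + (1 / real (card (supp3 v))) * (\<Sum>i\<in>supp3 v. h (dec3 v i)))"
  by auto
termination
proof (relation "measure (\<lambda>(a, b, c). a + b + c)")
  show "wf (measure (\<lambda>(a, b, c). a + b + c))" by simp
next
  fix v :: "nat \<times> nat \<times> nat" and i
  assume "\<not> card (supp3 v) \<le> 1" "i \<in> supp3 v"
  then show "(dec3 v i, v) \<in> measure (\<lambda>(a, b, c). a + b + c)"
    by (cases v) (auto simp: supp3_def dec3_def)
qed

end

theory Submission
  imports Defs
begin

text \<open>With the third stock empty, h only depends on the first two stocks and satisfies
  h(a, b) = 1 + (h(a-1, b) + h(a, b-1)) / 2 for a, b > 0, with h = 0 on the axes.
  The inequality h(a, b) \<le> h(a-1, b-1) + 2 is then proved by induction on a + b: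
  for a, b \<ge> 2 both sides obey the same averaging recursion, so the inequality for the
  two predecessors carries over. If a = 1 or b = 1 the right-hand side is 2, and
  h(1, b) \<le> 2 holds because h(1, b+1) = 1 + h(1, b) / 2.\<close>

declare h.simps [simp del]

lemma h_eq_0_if_card_supp3_le_1: "card (supp3 v) \<le> 1 \<Longrightarrow> h v = 0"
  by (subst h.simps) simp

lemma h_first_empty [simp]: "h (0, b, 0) = 0"
proof -
  have "supp3 (0, b, 0) \<subseteq> {2}" by (auto simp: supp3_def)
  then have "card (supp3 (0, b, 0)) \<le> 1" using card_mono[of "{2::nat}"] by fastforce
  then show ?thesis by (rule h_eq_0_if_card_supp3_le_1)
qed

lemma h_second_empty [simp]: "h (a, 0, 0) = 0"
proof -
  have "supp3 (a, 0, 0) \<subseteq> {1}" by (auto simp: supp3_def)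
  then have "card (supp3 (a, 0, 0)) \<le> 1" using card_mono[of "{1::nat}"] by fastforce
  then show ?thesis by (rule h_eq_0_if_card_supp3_le_1)
qed

lemma h_two_stocks_rec:
  assumes "a > 0" and "b > 0"
  shows "h (a, b, 0) = 1 + (h (a - 1, b, 0) + h (a, b - 1, 0)) / 2"
proof -
  have "supp3 (a, b, 0) = {1, 2}" using assms by (auto simp: supp3_def)
  then show ?thesis by (subst h.simps) (simp add: dec3_def)
qed

lemma h_first_one_le_2: "h (1, b, 0) \<le> 2"
proof (induction b)
  case 0
  then show ?case by simp
next
  case (Suc b)
  then show ?case by (simp add: h_two_stocks_rec)
qed

lemma h_second_one_le_2: "h (a, 1, 0) \<le> 2"
proof (induction a)
  case 0
  then show ?case by simp
next
  case (Suc a)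
  then show ?case by (simp add: h_two_stocks_rec)
qed

lemma h_two_stocks_le_pred_add_2:
  "a > 0 \<Longrightarrow> b > 0 \<Longrightarrow> h (a, b, 0) \<le> h (a - 1, b - 1, 0) + 2"
proof (induction "a + b" arbitrary: a b rule: less_induct)
  case less
  show ?case
  proof (cases "a = 1 \<or> b = 1")
    case True
    then show ?thesis using h_first_one_le_2[of b] h_second_one_le_2[of a] by auto
  next
    case False
    with less.prems have "a \<ge> 2" and "b \<ge> 2" by auto
    have first: "h (a - 1, b, 0) \<le> h (a - 2, b - 1, 0) + 2"
      using less.hyps[of "a - 1" b] \<open>a \<ge> 2\<close> \<open>b \<ge> 2\<close> by (simp add: numeral_2_eq_2)
    have second: "h (a, b - 1, 0) \<le> h (a - 1, b - 2, 0) + 2"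
      using less.hyps[of a "b - 1"] \<open>a \<ge> 2\<close> \<open>b \<ge> 2\<close> by (simp add: numeral_2_eq_2)
    have "h (a, b, 0) = 1 + (h (a - 1, b, 0) + h (a, b - 1, 0)) / 2"
      using less.prems by (rule h_two_stocks_rec)
    also have "\<dots> \<le> 1 + (h (a - 2, b - 1, 0) + h (a - 1, b - 2, 0)) / 2 + 2"
      using first second by argo
    also have "\<dots> = h (a - 1, b - 1, 0) + 2"
      using h_two_stocks_rec[of "a - 1" "b - 1"] \<open>a \<ge> 2\<close> \<open>b \<ge> 2\<close>
      by (simp add: numeral_2_eq_2)
    finally show ?thesis .
  qed
qed

theorem lemma7:
  fixes l m :: nat
  assumes "l \<ge> m" and "m > 0"
  shows "h (l, m, 0) \<le> h (l - 1, m - 1, 0) + 2"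
  using assms by (intro h_two_stocks_le_pred_add_2) auto

end
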